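(* Let $(\mathcal{S},\mathcal{R})$ be a complete positive presentation satisfying: (C) $\mathcal{R}$ contains no relation of the form $su=sv$ or $us=vs$ with $s\in\mathcal{S}$, $u,v\in\mathcal{S}^*$ and $u\neq v$; (E$_r$) there exists a set $\mathcal{S}'$ with $\mathcal{S}\subseteq\mathcal{S}'\subseteq\mathcal{S}^*$ such that for all $u,v\in\mathcal{S}'$ there exist $u',v'\in\mathcal{S}'$ satisfying $(uv')^{-1}(vu')\curvearrowright_r\varepsilon$. Then for every word $\mathbf{w}$ on $\mathcal{S}\cup\mathcal{S}^{-1}$ the following are equivalent: (i) $\mathbf{w}\equiv^{\pm}\varepsilon$; (ii) there exist $u,v\in\mathcal{S}^*$ with $\mathbf{w}\curvearrowright_r vu^{-1}$ and $u^{-1}v\curvearrowright_r\varepsilon$; (iii) there exist $u,v\in\mathcal{S}^*$ with $\mathbf{w}\curvearrowright_r vu^{-1}$ and $vu^{-1}\curvearrowright_l\varepsilon$.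
   Context: A positive presentation is a pair $(\mathcal{S},\mathcal{R})$ where $\mathcal{S}$ is a nonempty set of letters and $\mathcal{R}$ is a family of relations $u=v$, i.e. unordered pairs $\{u,v\}$ of nonempty words in the free monoid $\mathcal{S}^*$ (letters are regarded as length-one words). $\varepsilon$ denotes the empty word; $\equiv$ is the smallest congruence on $\mathcal{S}^*$ containing all pairs of $\mathcal{R}$. Let $\mathcal{S}^{-1}=\{s^{-1}:s\in\mathcal{S}\}$ be a disjoint copy of $\mathcal{S}$; $\equiv^{\pm}$ is the smallest congruence on $(\mathcal{S}\cup\mathcal{S}^{-1})^*$ containing all pairs of $\mathcal{R}$ and all pairs $\{ss^{-1},\varepsilon\}$, $\{s^{-1}s,\varepsilon\}$ for $s\in\mathcal{S}$. For $u\in\mathcal{S}^*$, $u^{-1}$ is obtained by reversing the order of the letters of $u$ and replacing each $s$ by $s^{-1}$. Right reversing: $\mathbf{w}\curvearrowright_r\mathbf{w}'$ (words on $\mathcal{S}\cup\mathcal{S}^{-1}$) if $\mathbf{w}'$ is obtained from $\mathbf{w}$ by finitely many steps, each deleting a subword $u^{-1}u$ ($u\in\mathcal{S}^*$ nonempty) or replacing a subword $u^{-1}v$ ($u,v\in\mathcal{S}^*$ nonempty) by $v'u'^{-1}$ where $uv'=vu'$ is a relation of $\mathcal{R}$. Left reversing: $\mathbf{w}\curvearrowright_l\mathbf{w}'$ if $\mathbf{w}'$ is obtained by finitely many steps, each deleting a subword $uu^{-1}$ ($u$ nonempty) or replacing a subword $uv^{-1}$ ($u,v$ nonempty) by $v'^{-1}u'$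 where $v'u=u'v$ is a relation of $\mathcal{R}$. $(\mathcal{S},\mathcal{R})$ is $r$-complete if for all $u,v,u',v'\in\mathcal{S}^*$ with $uv'\equiv vu'$ there exist $u'',v'',w\in\mathcal{S}^*$ with $u^{-1}v\curvearrowright_r v''u''^{-1}$, $u'\equiv u''w$, $v'\equiv v''w$; it is $l$-complete if for all $u,v,u',v'$ with $v'u\equiv u'v$ there exist $u'',v'',w$ with $uv^{-1}\curvearrowright_l v''^{-1}u''$, $u'\equiv wu''$, $v'\equiv wv''$; it is complete if it is both. *)

theory Defs
  imports Main
begin

text \<open>Letters of type 'a. A signed letter is a pair (s, b): b = True means s, b = False means s^-1.
  A relation u = v of a presentation is an unordered pair, represented by R containing (u,v) or (v,u).\<close>

type_synonym 'a sword = "('a \<times> bool) list"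

definition pos :: "'a list \<Rightarrow> 'a sword" where
  "pos u = map (\<lambda>s. (s, True)) u"

definition ninv :: "'a list \<Rightarrow> 'a sword" where
  "ninv u = rev (map (\<lambda>s. (s, False)) u)"

definition is_rel :: "('a list \<times> 'a list) set \<Rightarrow> 'a list \<Rightarrow> 'a list \<Rightarrow> bool" where
  "is_rel R u v \<longleftrightarrow> (u, v) \<in> R \<or> (v, u) \<in> R"

definition positive_presentation :: "'a set \<Rightarrow> ('a list \<times> 'a list) set \<Rightarrow> bool" where
  "positive_presentation S R \<longleftrightarrow> S \<noteq> {} \<and>
     (\<forall>(u, v) \<in> R. u \<noteq> [] \<and> v \<noteq> [] \<and> set u \<subseteq> S \<and> set v \<subseteq> S)"

inductive equivp :: "('a list \<times> 'a list) set \<Rightarrow> 'a list \<Rightarrow> 'a list \<Rightarrow> bool" for R where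
  eq_refl: "equivp R u u"
| eq_sym: "equivp R u v \<Longrightarrow> equivp R v u"
| eq_trans: "equivp R u v \<Longrightarrow> equivp R v w \<Longrightarrow> equivp R u w"
| eq_rel: "(u, v) \<in> R \<Longrightarrow> equivp R (x @ u @ y) (x @ v @ y)"

inductive equivpm :: "'a set \<Rightarrow> ('a list \<times> 'a list) set \<Rightarrow> 'a sword \<Rightarrow> 'a sword \<Rightarrow> bool" for S R where
  eqpm_refl: "equivpm S R w w"
| eqpm_sym: "equivpm S R w w' \<Longrightarrow> equivpm S R w' w"
| eqpm_trans: "equivpm S R w w' \<Longrightarrow> equivpm S R w' w'' \<Longrightarrow> equivpm S R w w''"
| eqpm_rel: "(u, v) \<in> R \<Longrightarrow> equivpm S R (x @ pos u @ y) (x @ pos v @ y)"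
| eqpm_cancel1: "s \<in> S \<Longrightarrow> equivpm S R (x @ [(s, True), (s, False)] @ y) (x @ y)"
| eqpm_cancel2: "s \<in> S \<Longrightarrow> equivpm S R (x @ [(s, False), (s, True)] @ y) (x @ y)"

inductive rrev1 :: "'a set \<Rightarrow> ('a list \<times> 'a list) set \<Rightarrow> 'a sword \<Rightarrow> 'a sword \<Rightarrow> bool" for S R where
  rrev_del: "u \<noteq> [] \<Longrightarrow> set u \<subseteq> S \<Longrightarrow> rrev1 S R (x @ ninv u @ pos u @ y) (x @ y)"
| rrev_rel: "u \<noteq> [] \<Longrightarrow> v \<noteq> [] \<Longrightarrow> is_rel R (u @ v') (v @ u') \<Longrightarrow>
     rrev1 S R (x @ ninv u @ pos v @ y) (x @ pos v' @ ninv u' @ y)"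

definition rrev :: "'a set \<Rightarrow> ('a list \<times> 'a list) set \<Rightarrow> 'a sword \<Rightarrow> 'a sword \<Rightarrow> bool" where
  "rrev S R = (rrev1 S R)\<^sup>*\<^sup>*"

inductive lrev1 :: "'a set \<Rightarrow> ('a list \<times> 'a list) set \<Rightarrow> 'a sword \<Rightarrow> 'a sword \<Rightarrow> bool" for S R where
  lrev_del: "u \<noteq> [] \<Longrightarrow> set u \<subseteq> S \<Longrightarrow> lrev1 S R (x @ pos u @ ninv u @ y) (x @ y)"
| lrev_rel: "u \<noteq> [] \<Longrightarrow> v \<noteq> [] \<Longrightarrow> is_rel R (v' @ u) (u' @ v) \<Longrightarrow>
     lrev1 S R (x @ pos u @ ninv v @ y) (x @ ninv v' @ pos u' @ y)"

definition lrev :: "'a set \<Rightarrow> ('a list \<times> 'a list) set \<Rightarrow> 'a sword \<Rightarrow> 'a sword \<Rightarrow> bool" where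
  "lrev S R = (lrev1 S R)\<^sup>*\<^sup>*"

definition r_complete :: "'a set \<Rightarrow> ('a list \<times> 'a list) set \<Rightarrow> bool" where
  "r_complete S R \<longleftrightarrow> (\<forall>u v u' v'. set u \<subseteq> S \<and> set v \<subseteq> S \<and> set u' \<subseteq> S \<and> set v' \<subseteq> S \<and>
      equivp R (u @ v') (v @ u') \<longrightarrow>
      (\<exists>u'' v'' w. set u'' \<subseteq> S \<and> set v'' \<subseteq> S \<and> set w \<subseteq> S \<and>
         rrev S R (ninv u @ pos v) (pos v'' @ ninv u'') \<and>
         equivp R u' (u'' @ w) \<and> equivp R v' (v'' @ w)))"

definition l_complete :: "'a set \<Rightarrow> ('a list \<times> 'a list) set \<Rightarrow> bool" where
  "l_complete S R \<longleftrightarrow> (\<forall>u v u' v'. set u \<subseteq> S \<and> set v \<subseteq> S \<and> set u' \<subseteq> S \<and> set v' \<subseteq> S \<and>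
      equivp R (v' @ u) (u' @ v) \<longrightarrow>
      (\<exists>u'' v'' w. set u'' \<subseteq> S \<and> set v'' \<subseteq> S \<and> set w \<subseteq> S \<and>
         lrev S R (pos u @ ninv v) (ninv v'' @ pos u'') \<and>
         equivp R u' (w @ u'') \<and> equivp R v' (w @ v'')))"

definition complete :: "'a set \<Rightarrow> ('a list \<times> 'a list) set \<Rightarrow> bool" where
  "complete S R \<longleftrightarrow> r_complete S R \<and> l_complete S R"

definition cond_C :: "'a set \<Rightarrow> ('a list \<times> 'a list) set \<Rightarrow> bool" where
  "cond_C S R \<longleftrightarrow> (\<forall>s u v. s \<in> S \<and> set u \<subseteq> S \<and> set v \<subseteq> S \<and> u \<noteq> v \<longrightarrow>
      \<not> is_rel R (s # u) (s # v) \<and> \<not> is_rel R (u @ [s]) (v @ [s]))"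

definition cond_Er :: "'a set \<Rightarrow> ('a list \<times> 'a list) set \<Rightarrow> bool" where
  "cond_Er S R \<longleftrightarrow> (\<exists>S'. (\<forall>s \<in> S. [s] \<in> S') \<and> (\<forall>u \<in> S'. set u \<subseteq> S) \<and>
      (\<forall>u \<in> S'. \<forall>v \<in> S'. \<exists>u' \<in> S'. \<exists>v' \<in> S'.
          rrev S R (ninv (u @ v') @ pos (v @ u')) []))"

end

theory Submission
  imports Defs
begin

text \<open>
  Reversing replaces u^-1 v by v' u'^-1 only when u v' = v u' is a relation, so it preserves
  \<equiv>^\<plusminus>; reading signed words as paths in the Cayley graph of the monoid shows moreover that
  u^-1 v reversing to \<epsilon> forces u \<equiv> v. Hence (E_r) gives common right multiples, and
  r-completeness then reverses every signed word to some v u^-1. Completeness and (C) make the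
  monoid cancellative, since s^-1 s can only right-reverse to some t t^-1 and s s^-1 can only
  left-reverse to some t^-1 t. By Ore's theorem the monoid embeds in its group of right
  fractions, realised here by letting signed words act from the left on pairs (a, b) standing
  for a b^-1. So v u^-1 \<equiv>^\<plusminus> \<epsilon> forces v \<equiv> u, and completeness turns v \<equiv> u into u^-1 v
  reversing to \<epsilon> on the right and v u^-1 reversing to \<epsilon> on the left.
\<close>

lemma pos_simps [simp]:
  "pos [] = []" "pos (s # u) = (s, True) # pos u" "pos (u @ v) = pos u @ pos v"
  by (simp_all add: pos_def)

lemma ninv_simps [simp]:
  "ninv [] = []" "ninv (s # u) = ninv u @ [(s, False)]" "ninv (u @ v) = ninv v @ ninv u"
  by (simp_all add: ninv_def)

lemma pos_eq_Nil_iff [simp]: "pos u = [] \<longleftrightarrow> u = []"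
  by (simp add: pos_def)

lemma ninv_eq_Nil_iff [simp]: "ninv u = [] \<longleftrightarrow> u = []"
  by (simp add: ninv_def)

lemma length_pos [simp]: "length (pos u) = length u"
  by (simp add: pos_def)

lemma length_ninv [simp]: "length (ninv u) = length u"
  by (simp add: ninv_def)

lemma fst_set_pos [simp]: "fst ` set (pos u) = set u"
  by (simp add: pos_def image_image)

lemma fst_set_ninv [simp]: "fst ` set (ninv u) = set u"
  by (simp add: ninv_def image_image)

lemma pos_eq_iff [simp]: "pos a = pos c \<longleftrightarrow> a = c"
  by (simp add: pos_def inj_def)

lemma ninv_eq_iff [simp]: "ninv a = ninv c \<longleftrightarrow> a = c"
  by (simp add: ninv_def inj_def)

lemma takeWhile_snd_pos_ninv: "takeWhile snd (pos a @ ninv b) = pos a"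
  by (induction a) (cases b rule: rev_exhaust; simp)+

lemma takeWhile_not_snd_ninv_pos: "takeWhile (Not \<circ> snd) (ninv a @ pos b) = ninv a"
  by (induction a rule: rev_induct) (cases b; simp)+

lemma pos_ninv_eq_iff: "pos a @ ninv b = pos c @ ninv d \<longleftrightarrow> a = c \<and> b = d"
  by (metis append_eq_append_conv pos_eq_iff ninv_eq_iff takeWhile_snd_pos_ninv)

lemma ninv_pos_eq_iff: "ninv a @ pos b = ninv c @ pos d \<longleftrightarrow> a = c \<and> b = d"
  by (metis append_eq_append_conv pos_eq_iff ninv_eq_iff takeWhile_not_snd_ninv_pos)

lemma append_nonempty_eq_pair:
  "x @ p @ q @ y = [a, b] \<Longrightarrow> p \<noteq> [] \<Longrightarrow> q \<noteq> [] \<Longrightarrow> x = [] \<and> p = [a] \<and> q = [b] \<and> y = []"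
  by (cases x; cases p; cases q) (auto simp: append_eq_Cons_conv)

lemma pos_ninv_neq_redex: "pos a @ ninv b \<noteq> x @ (s, False) # (t, True) # y"
proof -
  have "sorted_wrt (\<ge>) (map snd (pos a @ ninv b))"
    by (simp add: sorted_wrt_append pos_def ninv_def comp_def rev_map sorted_wrt_map sorted_wrt_rev)
  moreover have "\<not> sorted_wrt (\<ge>) (map snd (x @ (s, False) # (t, True) # y))"
    by (simp add: sorted_wrt_append)
  ultimately show ?thesis
    by metis
qed

lemma ninv_pos_neq_redex: "ninv a @ pos b \<noteq> x @ (s, True) # (t, False) # y"
proof -
  have "sorted (map snd (ninv a @ pos b))"
    by (simp add: sorted_append pos_def ninv_def comp_def rev_map sorted_map)
  moreover have "\<not> sorted (map snd (x @ (s, True) # (t, False) # y))"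
    by (simp add: sorted_append)
  ultimately show ?thesis
    by metis
qed

lemma equivp_append_cong: "equivp R a b \<Longrightarrow> equivp R (x @ a @ y) (x @ b @ y)"
proof (induction rule: equivp.induct)
  case (eq_rel u v x' y')
  then show ?case
    using equivp.eq_rel[of u v R "x @ x'" "y' @ y"] by simp
qed (auto intro: equivp.intros)

lemma equivp_append_left: "equivp R a b \<Longrightarrow> equivp R (x @ a) (x @ b)"
  using equivp_append_cong[of R a b x "[]"] by simp

lemma equivp_append_right: "equivp R a b \<Longrightarrow> equivp R (a @ y) (b @ y)"
  using equivp_append_cong[of R a b "[]" y] by simp

lemma equivp_if_is_rel: "is_rel R a b \<Longrightarrow> equivp R a b"
  using equivp.eq_rel[of a b R "[]" "[]"] equivp.eq_rel[of b a R "[]" "[]"]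
  by (auto simp: is_rel_def intro: equivp.eq_sym)

lemma equivp_Nil_iff:
  assumes "positive_presentation S R" and "equivp R a b"
  shows "a = [] \<longleftrightarrow> b = []"
  using assms(2,1) by induction (auto simp: positive_presentation_def)

lemma is_rel_letters:
  assumes "positive_presentation S R" and "is_rel R a b"
  shows "set a \<subseteq> S" "set b \<subseteq> S" "a \<noteq> []" "b \<noteq> []"
  using assms by (auto simp: positive_presentation_def is_rel_def)

declare equivp.eq_trans [trans] equivpm.eqpm_trans [trans]

lemma equivpm_append_cong: "equivpm S R a b \<Longrightarrow> equivpm S R (x @ a @ y) (x @ b @ y)"
proof (induction rule: equivpm.induct)
  case (eqpm_rel u v x' y')
  then show ?case
    using equivpm.eqpm_rel[of u v R S "x @ x'" "y' @ y"] by simp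
next
  case (eqpm_cancel1 s x' y')
  then show ?case
    using equivpm.eqpm_cancel1[of s S R "x @ x'" "y' @ y"] by simp
next
  case (eqpm_cancel2 s x' y')
  then show ?case
    using equivpm.eqpm_cancel2[of s S R "x @ x'" "y' @ y"] by simp
qed (auto intro: equivpm.intros)

lemma equivpm_pos: "equivp R a b \<Longrightarrow> equivpm S R (pos a) (pos b)"
proof (induction rule: equivp.induct)
  case (eq_rel u v x y)
  then show ?case
    using equivpm.eqpm_rel[of u v R S "pos x" "pos y"] by simp
qed (auto intro: equivpm.intros)

lemma equivpm_ninv_pos: "set u \<subseteq> S \<Longrightarrow> equivpm S R (ninv u @ pos u) []"
proof (induction u)
  case (Cons s u)
  then have "equivpm S R (ninv u @ [(s, False), (s, True)] @ pos u) (ninv u @ pos u)"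
    by (intro equivpm.eqpm_cancel2) auto
  with Cons show ?case
    by (auto intro: equivpm.eqpm_trans)
qed (simp add: equivpm.eqpm_refl)

lemma equivpm_pos_ninv: "set u \<subseteq> S \<Longrightarrow> equivpm S R (pos u @ ninv u) []"
proof (induction u rule: rev_induct)
  case (snoc s u)
  then have "equivpm S R (pos u @ [(s, True), (s, False)] @ ninv u) (pos u @ ninv u)"
    by (intro equivpm.eqpm_cancel1) auto
  with snoc show ?case
    by (auto intro: equivpm.eqpm_trans)
qed (simp add: equivpm.eqpm_refl)

lemma equivpm_pos_ninv_if_equivp:
  assumes "equivp R v u" and "set u \<subseteq> S"
  shows "equivpm S R (pos v @ ninv u) []"
proof -
  have "equivpm S R (pos v @ ninv u) (pos u @ ninv u)"
    using equivpm_append_cong[OF equivpm_pos[OF assms(1)], of S "[]" "ninv u"] by simp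
  also have "equivpm S R \<dots> []"
    using equivpm_pos_ninv[OF assms(2)] .
  finally show ?thesis .
qed

lemma equivpm_letters:
  assumes "positive_presentation S R" and "equivpm S R w w'"
  shows "fst ` set w \<subseteq> S \<longleftrightarrow> fst ` set w' \<subseteq> S"
  using assms(2,1) by induction (auto simp: positive_presentation_def image_Un)

lemma rrev1_equivpm:
  assumes "positive_presentation S R" and "rrev1 S R w w'"
  shows "equivpm S R w w'"
  using assms(2)
proof induction
  case (rrev_del u x y)
  then show ?case
    using equivpm_append_cong[OF equivpm_ninv_pos[of u S R], of x y] by simp
next
  case (rrev_rel u v v' u' x y)
  note letters = is_rel_letters[OF assms(1) rrev_rel(3)]
  have "equivpm S R (ninv u @ pos v) (ninv u @ pos v @ pos u' @ ninv u')"
    using equivpm_append_cong[OF equivpm_pos_ninv[of u' S R], of "ninv u @ pos v" "[]"] letters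
    by (simp add: equivpm.eqpm_sym)
  also have "equivpm S R \<dots> (ninv u @ pos u @ pos v' @ ninv u')"
    using equivpm_append_cong[OF equivpm_pos[OF equivp_if_is_rel[OF rrev_rel(3)]], of S "ninv u" "ninv u'"]
    by (simp add: equivpm.eqpm_sym)
  also have "equivpm S R \<dots> (pos v' @ ninv u')"
    using equivpm_append_cong[OF equivpm_ninv_pos[of u S R], of "[]"] letters by simp
  finally show ?case
    using equivpm_append_cong by fastforce
qed

lemma lrev1_equivpm:
  assumes "positive_presentation S R" and "lrev1 S R w w'"
  shows "equivpm S R w w'"
  using assms(2)
proof induction
  case (lrev_del u x y)
  then show ?case
    using equivpm_append_cong[OF equivpm_pos_ninv[of u S R], of x y] by simp
next
  case (lrev_rel u v v' u' x y)
  note letters = is_rel_letters[OF assms(1) lrev_rel(3)]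
  have "equivpm S R (pos u @ ninv v) (ninv v' @ pos v' @ pos u @ ninv v)"
    using equivpm_append_cong[OF equivpm_ninv_pos[of v' S R], of "[]" "pos u @ ninv v"] letters
    by (simp add: equivpm.eqpm_sym)
  also have "equivpm S R \<dots> (ninv v' @ pos u' @ pos v @ ninv v)"
    using equivpm_append_cong[OF equivpm_pos[OF equivp_if_is_rel[OF lrev_rel(3)]], of S "ninv v'" "ninv v"]
    by simp
  also have "equivpm S R \<dots> (ninv v' @ pos u')"
    using equivpm_append_cong[OF equivpm_pos_ninv[of v S R], of "ninv v' @ pos u'" "[]"] letters
    by simp
  finally show ?case
    using equivpm_append_cong by fastforce
qed

lemma rrev_equivpm:
  assumes "positive_presentation S R" and "rrev S R w w'"
  shows "equivpm S R w w'"
  using assms(2) unfolding rrev_def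
  by (induction rule: rtranclp_induct) (auto intro: equivpm.intros rrev1_equivpm[OF assms(1)])

lemma lrev_equivpm:
  assumes "positive_presentation S R" and "lrev S R w w'"
  shows "equivpm S R w w'"
  using assms(2) unfolding lrev_def
  by (induction rule: rtranclp_induct) (auto intro: equivpm.intros lrev1_equivpm[OF assms(1)])

lemma rrev_trans [trans]: "rrev S R a b \<Longrightarrow> rrev S R b c \<Longrightarrow> rrev S R a c"
  unfolding rrev_def by (rule rtranclp_trans)

lemma rrev_append_cong:
  assumes "rrev S R a b"
  shows "rrev S R (x @ a @ y) (x @ b @ y)"
proof -
  have step: "rrev1 S R (x @ a @ y) (x @ b @ y)" if "rrev1 S R a b" for a b
    using that
  proof induction
    case (rrev_del u x' y')
    then show ?case
      using rrev1.rrev_del[of u S R "x @ x'" "y' @ y"] by simp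
  next
    case (rrev_rel u v v' u' x' y')
    then show ?case
      using rrev1.rrev_rel[of u v R v' u' S "x @ x'" "y' @ y"] by simp
  qed
  show ?thesis
    using assms unfolding rrev_def
    by (induction rule: rtranclp_induct) (auto intro: rtranclp.rtrancl_into_rtrancl step)
qed

lemma rrev1_redex: "rrev1 S R w w' \<Longrightarrow> \<exists>x s t y. w = x @ (s, False) # (t, True) # y"
proof (induction rule: rrev1.induct)
  case (rrev_del u x y)
  then obtain c u0 where "u = c # u0"
    by (cases u) auto
  then show ?case
    by (intro exI[of _ "x @ ninv u0"]) auto
next
  case (rrev_rel u v v' u' x y)
  then obtain c u0 d v0 where "u = c # u0" "v = d # v0"
    by (cases u; cases v) auto
  then show ?case
    by (intro exI[of _ "x @ ninv u0"]) auto
qed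

lemma lrev1_redex: "lrev1 S R w w' \<Longrightarrow> \<exists>x s t y. w = x @ (s, True) # (t, False) # y"
proof (induction rule: lrev1.induct)
  case (lrev_del u x y)
  then obtain c u0 where "u = u0 @ [c]"
    by (cases u rule: rev_cases) auto
  then show ?case
    by (intro exI[of _ "x @ pos u0"]) auto
next
  case (lrev_rel u v v' u' x y)
  then obtain c u0 d v0 where "u = u0 @ [c]" "v = v0 @ [d]"
    by (cases u rule: rev_cases; cases v rule: rev_cases) auto
  then show ?case
    by (intro exI[of _ "x @ pos u0"]) auto
qed

lemma rrev_pos_ninv_irreducible: "rrev S R (pos a @ ninv b) w \<Longrightarrow> w = pos a @ ninv b"
  unfolding rrev_def
  by (erule converse_rtranclpE) (auto dest!: rrev1_redex simp: pos_ninv_neq_redex)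

lemma lrev_ninv_pos_irreducible: "lrev S R (ninv a @ pos b) w \<Longrightarrow> w = ninv a @ pos b"
  unfolding lrev_def
  by (erule converse_rtranclpE) (auto dest!: lrev1_redex simp: ninv_pos_neq_redex)

section \<open>Paths in the Cayley graph\<close>

fun cayley_path :: "('a list \<times> 'a list) set \<Rightarrow> 'a sword \<Rightarrow> 'a list \<Rightarrow> 'a list \<Rightarrow> bool" where
  "cayley_path R [] x y \<longleftrightarrow> equivp R x y"
| "cayley_path R ((s, True) # w) x y \<longleftrightarrow> cayley_path R w (x @ [s]) y"
| "cayley_path R ((s, False) # w) x y \<longleftrightarrow> (\<exists>z. equivp R x (z @ [s]) \<and> cayley_path R w z y)"

lemma cayley_path_equivp_start:
  "cayley_path R w x y \<Longrightarrow> equivp R x' x \<Longrightarrow> cayley_path R w x' y"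
proof (induction R w x y arbitrary: x' rule: cayley_path.induct)
  case (2 R s w x y)
  then show ?case
    using equivp_append_right by fastforce
qed (auto intro: equivp.eq_trans)

lemma cayley_path_pos_append:
  "cayley_path R (pos v @ w) x y \<longleftrightarrow> cayley_path R w (x @ v) y"
  by (induction v arbitrary: x) auto

lemma cayley_path_ninv_append:
  "cayley_path R (ninv u @ w) x y \<longleftrightarrow> (\<exists>z. equivp R x (z @ u) \<and> cayley_path R w z y)"
proof (induction u arbitrary: x rule: rev_induct)
  case Nil
  show ?case
    using cayley_path_equivp_start by (auto intro: equivp.eq_refl)
next
  case (snoc s u)
  have key: "(\<exists>z'. equivp R x (z' @ [s]) \<and> equivp R z' (z @ u)) \<longleftrightarrow> equivp R x (z @ u @ [s])" for z
  proof
    show "\<exists>z'. equivp R x (z' @ [s]) \<and> equivp R z' (z @ u) \<Longrightarrow> equivp R x (z @ u @ [s])"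
      using equivp_append_right[of R _ "z @ u" "[s]"] by (auto intro: equivp.eq_trans)
    show "equivp R x (z @ u @ [s]) \<Longrightarrow> \<exists>z'. equivp R x (z' @ [s]) \<and> equivp R z' (z @ u)"
      by (intro exI[of _ "z @ u"]) (simp add: equivp.eq_refl)
  qed
  have "cayley_path R (ninv (u @ [s]) @ w) x y \<longleftrightarrow>
      (\<exists>z. (\<exists>z'. equivp R x (z' @ [s]) \<and> equivp R z' (z @ u)) \<and> cayley_path R w z y)"
    using snoc.IH by auto
  also have "\<dots> \<longleftrightarrow> (\<exists>z. equivp R x (z @ u @ [s]) \<and> cayley_path R w z y)"
    using key by simp
  finally show ?case
    by simp
qed

lemma cayley_path_append_cong:
  "(\<And>x. cayley_path R w x y \<Longrightarrow> cayley_path R w' x y) \<Longrightarrow>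
    cayley_path R (v @ w) x y \<Longrightarrow> cayley_path R (v @ w') x y"
  by (induction R v x y rule: cayley_path.induct) auto

lemma cayley_path_rrev1:
  assumes "rrev1 S R w w'" and "cayley_path R w x y"
  shows "cayley_path R w' x y"
  using assms
proof (induction arbitrary: x)
  case (rrev_del u x0 y0)
  have "cayley_path R (ninv u @ pos u @ y0) x y \<Longrightarrow> cayley_path R y0 x y" for x
    by (auto simp: cayley_path_ninv_append cayley_path_pos_append intro: cayley_path_equivp_start)
  with rrev_del.prems show ?case
    by (rule cayley_path_append_cong[rotated])
next
  case (rrev_rel u v v' u' x0 y0)
  have "cayley_path R (pos v' @ ninv u' @ y0) x y" if "cayley_path R (ninv u @ pos v @ y0) x y" for x
  proof -
    from that obtain z where "equivp R x (z @ u)" and "cayley_path R y0 (z @ v) y"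
      by (auto simp: cayley_path_ninv_append cayley_path_pos_append)
    moreover have "equivp R (x @ v') ((z @ v) @ u')"
    proof -
      have "equivp R (x @ v') (z @ u @ v')"
        using equivp_append_right[OF \<open>equivp R x (z @ u)\<close>] by simp
      also have "equivp R \<dots> (z @ v @ u')"
        using equivp_append_left[OF equivp_if_is_rel[OF rrev_rel(3)]] .
      finally show ?thesis
        by simp
    qed
    ultimately show ?thesis
      by (auto simp: cayley_path_ninv_append cayley_path_pos_append intro!: exI[of _ "z @ v"])
  qed
  with rrev_rel.prems show ?case
    by (rule cayley_path_append_cong[rotated])
qed

lemma cayley_path_rrev:
  assumes "rrev S R w w'" and "cayley_path R w x y"
  shows "cayley_path R w' x y"
  using assms unfolding rrev_def
  by (induction rule: rtranclp_induct) (auto intro: cayley_path_rrev1)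

lemma equivp_if_rrev_Nil:
  assumes "rrev S R (ninv u @ pos v) []"
  shows "equivp R u v"
proof -
  have "cayley_path R (ninv u @ pos v @ []) u v"
    unfolding cayley_path_ninv_append cayley_path_pos_append
    by (auto intro!: exI[of _ "[]"] equivp.eq_refl)
  with assms have "cayley_path R [] u v"
    using cayley_path_rrev by fastforce
  then show ?thesis
    by simp
qed

section \<open>Completeness and cancellativity\<close>

lemma r_completeD:
  assumes "r_complete S R" and "set u \<subseteq> S" "set v \<subseteq> S" "set u' \<subseteq> S" "set v' \<subseteq> S"
    and "equivp R (u @ v') (v @ u')"
  shows "\<exists>u'' v'' w. set u'' \<subseteq> S \<and> set v'' \<subseteq> S \<and> set w \<subseteq> S \<and>
    rrev S R (ninv u @ pos v) (pos v'' @ ninv u'') \<and> equivp R u' (u'' @ w) \<and> equivp R v' (v'' @ w)"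
  using assms unfolding r_complete_def by simp

lemma l_completeD:
  assumes "l_complete S R" and "set u \<subseteq> S" "set v \<subseteq> S" "set u' \<subseteq> S" "set v' \<subseteq> S"
    and "equivp R (v' @ u) (u' @ v)"
  shows "\<exists>u'' v'' w. set u'' \<subseteq> S \<and> set v'' \<subseteq> S \<and> set w \<subseteq> S \<and>
    lrev S R (pos u @ ninv v) (ninv v'' @ pos u'') \<and> equivp R u' (w @ u'') \<and> equivp R v' (w @ v'')"
  using assms unfolding l_complete_def by simp

lemma rrev_Nil_iff_equivp:
  assumes "positive_presentation S R" and "r_complete S R"
    and "set u \<subseteq> S" and "set v \<subseteq> S"
  shows "rrev S R (ninv u @ pos v) [] \<longleftrightarrow> equivp R u v"
proof
  assume "equivp R u v"
  then have "set [] \<subseteq> S" and "equivp R (u @ []) (v @ [])"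
    by simp_all
  then obtain u' v' z where uv: "rrev S R (ninv u @ pos v) (pos v' @ ninv u')"
    and u': "equivp R [] (u' @ z)" and v': "equivp R [] (v' @ z)"
    using r_completeD[OF assms(2-4)] by blast
  have "u' = []" and "v' = []"
    using equivp_Nil_iff[OF assms(1) u'] equivp_Nil_iff[OF assms(1) v'] by simp_all
  with uv show "rrev S R (ninv u @ pos v) []"
    by simp
qed (rule equivp_if_rrev_Nil)

lemma lrev_Nil_if_equivp:
  assumes "positive_presentation S R" and "l_complete S R"
    and "set u \<subseteq> S" and "set v \<subseteq> S" and "equivp R u v"
  shows "lrev S R (pos u @ ninv v) []"
proof -
  have "set [] \<subseteq> S" and "equivp R ([] @ u) ([] @ v)"
    using assms(5) by simp_all
  then obtain u' v' z where uv: "lrev S R (pos u @ ninv v) (ninv v' @ pos u')"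
    and u': "equivp R [] (z @ u')" and v': "equivp R [] (z @ v')"
    using l_completeD[OF assms(2-4)] by blast
  have "u' = []" and "v' = []"
    using equivp_Nil_iff[OF assms(1) u'] equivp_Nil_iff[OF assms(1) v'] by simp_all
  with uv show ?thesis
    by simp
qed

lemma rrev1_ninv_pos_same_letter:
  assumes "positive_presentation S R" and "cond_C S R" and "s \<in> S"
    and "rrev1 S R [(s, False), (s, True)] w"
  shows "\<exists>t. w = pos t @ ninv t"
  using assms(4)
proof cases
  case (rrev_del u x y)
  have "length x + 2 * length u + length y = 2"
    using arg_cong[OF rrev_del(1), of length] by simp
  with rrev_del(3) have "x = [] \<and> y = []"
    by (cases u) auto
  with rrev_del show ?thesis
    by (intro exI[of _ "[]"]) simp
next
  case (rrev_rel u v v' u' x y)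
  then have "x = [] \<and> y = [] \<and> ninv u = ninv [s] \<and> pos v = pos [s]"
    using append_nonempty_eq_pair[OF rrev_rel(1)[symmetric]] by simp
  then have shape: "x = [] \<and> y = [] \<and> u = [s] \<and> v = [s]"
    by (simp only: ninv_eq_iff pos_eq_iff)
  have "set v' \<subseteq> S" "set u' \<subseteq> S"
    using is_rel_letters[OF assms(1) rrev_rel(5)] by auto
  moreover have "is_rel R (s # v') (s # u')"
    using rrev_rel(5) shape by simp
  ultimately have "v' = u'"
    using assms(2,3) unfolding cond_C_def by blast
  with rrev_rel(2) shape show ?thesis
    by auto
qed

lemma lrev1_pos_ninv_same_letter:
  assumes "positive_presentation S R" and "cond_C S R" and "s \<in> S"
    and "lrev1 S R [(s, True), (s, False)] w"
  shows "\<exists>t. w = ninv t @ pos t"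
  using assms(4)
proof cases
  case (lrev_del u x y)
  have "length x + 2 * length u + length y = 2"
    using arg_cong[OF lrev_del(1), of length] by simp
  with lrev_del(3) have "x = [] \<and> y = []"
    by (cases u) auto
  with lrev_del show ?thesis
    by (intro exI[of _ "[]"]) simp
next
  case (lrev_rel u v v' u' x y)
  then have "x = [] \<and> y = [] \<and> pos u = pos [s] \<and> ninv v = ninv [s]"
    using append_nonempty_eq_pair[OF lrev_rel(1)[symmetric]] by simp
  then have shape: "x = [] \<and> y = [] \<and> u = [s] \<and> v = [s]"
    by (simp only: ninv_eq_iff pos_eq_iff)
  have "set v' \<subseteq> S" "set u' \<subseteq> S"
    using is_rel_letters[OF assms(1) lrev_rel(5)] by auto
  moreover have "is_rel R (v' @ [s]) (u' @ [s])"
    using lrev_rel(5) shape by simp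
  ultimately have "v' = u'"
    using assms(2,3) unfolding cond_C_def by blast
  with lrev_rel(2) shape show ?thesis
    by auto
qed

lemma rrev_ninv_pos_same_letter:
  assumes "positive_presentation S R" and "cond_C S R" and "s \<in> S"
    and "rrev S R (ninv [s] @ pos [s]) (pos v @ ninv u)"
  shows "u = v"
  using assms(4) unfolding rrev_def
proof (cases rule: converse_rtranclpE)
  case base
  then show ?thesis
    using pos_ninv_neq_redex[of v u "[]" s s "[]"] by simp
next
  case (step w)
  then obtain t where "w = pos t @ ninv t"
    using rrev1_ninv_pos_same_letter[OF assms(1-3)] by auto
  with step(2) show ?thesis
    using rrev_pos_ninv_irreducible[unfolded rrev_def] by (metis pos_ninv_eq_iff)
qed

lemma lrev_pos_ninv_same_letter:
  assumes "positive_presentation S R" and "cond_C S R" and "s \<in> S"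
    and "lrev S R (pos [s] @ ninv [s]) (ninv v @ pos u)"
  shows "u = v"
  using assms(4) unfolding lrev_def
proof (cases rule: converse_rtranclpE)
  case base
  then show ?thesis
    using ninv_pos_neq_redex[of v u "[]" s s "[]"] by simp
next
  case (step w)
  then obtain t where "w = ninv t @ pos t"
    using lrev1_pos_ninv_same_letter[OF assms(1-3)] by auto
  with step(2) show ?thesis
    using lrev_ninv_pos_irreducible[unfolded lrev_def] by (metis ninv_pos_eq_iff)
qed

lemma equivp_Cons_cancel:
  assumes "positive_presentation S R" and "r_complete S R" and "cond_C S R"
    and "s \<in> S" and "set x \<subseteq> S" and "set y \<subseteq> S" and "equivp R (s # x) (s # y)"
  shows "equivp R x y"
proof -
  have "set [s] \<subseteq> S" and "equivp R ([s] @ x) ([s] @ y)"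
    using assms(4,7) by simp_all
  then obtain u v z where "rrev S R (ninv [s] @ pos [s]) (pos v @ ninv u)"
    and "equivp R y (u @ z)" and "equivp R x (v @ z)"
    using r_completeD[OF assms(2) _ _ assms(6,5)] by blast
  moreover from this(1) have "u = v"
    by (rule rrev_ninv_pos_same_letter[OF assms(1,3,4)])
  ultimately show ?thesis
    using equivp.eq_trans equivp.eq_sym by metis
qed

lemma equivp_snoc_cancel:
  assumes "positive_presentation S R" and "l_complete S R" and "cond_C S R"
    and "s \<in> S" and "set x \<subseteq> S" and "set y \<subseteq> S" and "equivp R (x @ [s]) (y @ [s])"
  shows "equivp R x y"
proof -
  have "set [s] \<subseteq> S"
    using assms(4) by simp
  then obtain u v z where "lrev S R (pos [s] @ ninv [s]) (ninv v @ pos u)"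
    and "equivp R y (z @ u)" and "equivp R x (z @ v)"
    using l_completeD[OF assms(2) _ _ assms(6,5,7)] by blast
  moreover from this(1) have "u = v"
    by (rule lrev_pos_ninv_same_letter[OF assms(1,3,4)])
  ultimately show ?thesis
    using equivp.eq_trans equivp.eq_sym by metis
qed

lemma equivp_append_right_cancel:
  assumes "positive_presentation S R" and "l_complete S R" and "cond_C S R"
  shows "set z \<subseteq> S \<Longrightarrow> set x \<subseteq> S \<Longrightarrow> set y \<subseteq> S \<Longrightarrow> equivp R (x @ z) (y @ z) \<Longrightarrow> equivp R x y"
proof (induction z rule: rev_induct)
  case (snoc s z)
  then show ?case
    using equivp_snoc_cancel[OF assms, of s "x @ z" "y @ z"] by simp
qed simp

section \<open>Common right multiples\<close>

definition common_right_multiples :: "'a set \<Rightarrow> ('a list \<times> 'a list) set \<Rightarrow> bool" where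
  "common_right_multiples S R \<longleftrightarrow> (\<forall>u v. set u \<subseteq> S \<longrightarrow> set v \<subseteq> S \<longrightarrow>
     (\<exists>u' v'. set u' \<subseteq> S \<and> set v' \<subseteq> S \<and> equivp R (u @ v') (v @ u')))"

lemma common_right_multiplesD:
  "common_right_multiples S R \<Longrightarrow> set u \<subseteq> S \<Longrightarrow> set v \<subseteq> S \<Longrightarrow>
    \<exists>u' v'. set u' \<subseteq> S \<and> set v' \<subseteq> S \<and> equivp R (u @ v') (v @ u')"
  by (simp add: common_right_multiples_def)

lemma right_multiple_of_generator:
  assumes letters: "\<forall>s\<in>S. [s] \<in> G" and words: "\<forall>u\<in>G. set u \<subseteq> S"
    and closed: "\<forall>u\<in>G. \<forall>v\<in>G. \<exists>u'\<in>G. \<exists>v'\<in>G. equivp R (u @ v') (v @ u')"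
    and "a \<in> G" and "set v \<subseteq> S"
  shows "\<exists>a'\<in>G. \<exists>v'. set v' \<subseteq> S \<and> equivp R (a @ v') (v @ a')"
  using assms(4,5)
proof (induction v arbitrary: a)
  case Nil
  then show ?case
    by (auto intro!: exI[of _ "[]"] equivp.eq_refl)
next
  case (Cons s v)
  obtain a1 v1 where "a1 \<in> G" "v1 \<in> G" and a1: "equivp R (a @ v1) ([s] @ a1)"
    using closed letters Cons.prems by force
  then obtain a' v2 where "a' \<in> G" "set v2 \<subseteq> S" and a': "equivp R (a1 @ v2) (v @ a')"
    using Cons.IH[of a1] Cons.prems by auto
  have "equivp R (a @ v1 @ v2) ([s] @ a1 @ v2)"
    using equivp_append_right[OF a1, of v2] by simp
  also have "equivp R \<dots> ((s # v) @ a')"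
    using equivp_append_left[OF a', of "[s]"] by simp
  finally have "equivp R (a @ v1 @ v2) ((s # v) @ a')" .
  moreover have "set (v1 @ v2) \<subseteq> S"
    using \<open>v1 \<in> G\<close> \<open>set v2 \<subseteq> S\<close> words by auto
  ultimately show ?case
    using \<open>a' \<in> G\<close> by blast
qed

lemma common_right_multiplesI_generators:
  assumes letters: "\<forall>s\<in>S. [s] \<in> G" and words: "\<forall>u\<in>G. set u \<subseteq> S"
    and closed: "\<forall>u\<in>G. \<forall>v\<in>G. \<exists>u'\<in>G. \<exists>v'\<in>G. equivp R (u @ v') (v @ u')"
  shows "common_right_multiples S R"
proof -
  have "\<exists>u' v'. set u' \<subseteq> S \<and> set v' \<subseteq> S \<and> equivp R (u @ v') (v @ u')"
    if "set u \<subseteq> S" and "set v \<subseteq> S" for u v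
    using that
  proof (induction u arbitrary: v)
    case Nil
    then show ?case
      by (intro exI[of _ "[]"] exI[of _ v]) (simp add: equivp.eq_refl)
  next
    case (Cons s u)
    obtain a' v1 where "a' \<in> G" "set v1 \<subseteq> S" and a': "equivp R ([s] @ v1) (v @ a')"
      using right_multiple_of_generator[OF assms, of "[s]" v] Cons.prems letters by auto
    then obtain u2 v2 where "set u2 \<subseteq> S" "set v2 \<subseteq> S" and uv2: "equivp R (u @ v2) (v1 @ u2)"
      using Cons.IH[of v1] Cons.prems by auto
    have "equivp R ((s # u) @ v2) ([s] @ v1 @ u2)"
      using equivp_append_left[OF uv2, of "[s]"] by simp
    also have "equivp R \<dots> (v @ a' @ u2)"
      using equivp_append_right[OF a', of u2] by simp
    finally have "equivp R ((s # u) @ v2) (v @ a' @ u2)" .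
    moreover have "set (a' @ u2) \<subseteq> S"
      using \<open>a' \<in> G\<close> \<open>set u2 \<subseteq> S\<close> words by auto
    ultimately show ?case
      using \<open>set v2 \<subseteq> S\<close> by blast
  qed
  then show ?thesis
    unfolding common_right_multiples_def by blast
qed

lemma common_right_multiples_if_cond_Er:
  assumes "cond_Er S R"
  shows "common_right_multiples S R"
proof -
  obtain G where "\<forall>s\<in>S. [s] \<in> G" and "\<forall>u\<in>G. set u \<subseteq> S"
    and "\<forall>u\<in>G. \<forall>v\<in>G. \<exists>u'\<in>G. \<exists>v'\<in>G. rrev S R (ninv (u @ v') @ pos (v @ u')) []"
    using assms unfolding cond_Er_def by blast
  then show ?thesis
    by (intro common_right_multiplesI_generators) (blast dest: equivp_if_rrev_Nil)+
qed

lemma rrev_ninv_pos_to_pos_ninv: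
  assumes "r_complete S R" and "common_right_multiples S R" and "set u \<subseteq> S" and "set v \<subseteq> S"
  shows "\<exists>u' v'. set u' \<subseteq> S \<and> set v' \<subseteq> S \<and> rrev S R (ninv u @ pos v) (pos v' @ ninv u')"
proof -
  obtain u' v' where "set u' \<subseteq> S" "set v' \<subseteq> S" "equivp R (u @ v') (v @ u')"
    using common_right_multiplesD[OF assms(2-4)] by blast
  from r_completeD[OF assms(1,3,4) this] show ?thesis
    by blast
qed

lemma rrev_to_pos_ninv:
  assumes "r_complete S R" and "common_right_multiples S R" and "fst ` set w \<subseteq> S"
  shows "\<exists>a b. set a \<subseteq> S \<and> set b \<subseteq> S \<and> rrev S R w (pos a @ ninv b)"
  using assms(3)
proof (induction w)
  case Nil
  show ?case
    by (intro exI[of _ "[]"]) (simp add: rrev_def)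
next
  case (Cons l w)
  obtain s sign where l: "l = (s, sign)" and "s \<in> S"
    using Cons.prems by (cases l) auto
  obtain a b where "set a \<subseteq> S" "set b \<subseteq> S" and w: "rrev S R w (pos a @ ninv b)"
    using Cons by auto
  have lw: "rrev S R (l # w) (l # pos a @ ninv b)"
    using rrev_append_cong[OF w, of "[l]" "[]"] by simp
  show ?case
  proof (cases sign)
    case True
    with lw l \<open>s \<in> S\<close> \<open>set a \<subseteq> S\<close> \<open>set b \<subseteq> S\<close> show ?thesis
      by (intro exI[of _ "s # a"] exI[of _ b]) simp
  next
    case False
    have "set [s] \<subseteq> S"
      using \<open>s \<in> S\<close> by simp
    then obtain u'' v'' where "set u'' \<subseteq> S" "set v'' \<subseteq> S"
      and sa: "rrev S R (ninv [s] @ pos a) (pos v'' @ ninv u'')"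
      using rrev_ninv_pos_to_pos_ninv[OF assms(1,2) _ \<open>set a \<subseteq> S\<close>] by blast
    have "rrev S R (l # w) (ninv [s] @ pos a @ ninv b)"
      using lw l False by simp
    also have "rrev S R \<dots> (pos v'' @ ninv (b @ u''))"
      using rrev_append_cong[OF sa, of "[]" "ninv b"] by simp
    finally have "rrev S R (l # w) (pos v'' @ ninv (b @ u''))" .
    moreover have "set (b @ u'') \<subseteq> S"
      using \<open>set u'' \<subseteq> S\<close> \<open>set b \<subseteq> S\<close> by simp
    ultimately show ?thesis
      using \<open>set v'' \<subseteq> S\<close> by blast
  qed
qed

section \<open>The group of right fractions\<close>

locale ore_presentation =
  fixes S :: "'a set" and R :: "('a list \<times> 'a list) set"
  assumes positive: "positive_presentation S R"
    and complete: "complete S R"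
    and cond_C: "cond_C S R"
    and right_multiples: "common_right_multiples S R"
begin

lemma r_complete: "r_complete S R"
  using complete by (simp add: complete_def)

lemma l_complete: "l_complete S R"
  using complete by (simp add: complete_def)

text \<open>A pair (a, b) stands for the right fraction a b^-1.\<close>

definition frac_equiv :: "'a list \<Rightarrow> 'a list \<Rightarrow> 'a list \<Rightarrow> 'a list \<Rightarrow> bool" where
  "frac_equiv a b a' b' \<longleftrightarrow> (\<exists>c c'. set c \<subseteq> S \<and> set c' \<subseteq> S \<and>
     equivp R (a @ c) (a' @ c') \<and> equivp R (b @ c) (b' @ c'))"

definition frac_class :: "'a list \<Rightarrow> 'a list \<Rightarrow> ('a list \<times> 'a list) set" where
  "frac_class a b = {(a', b'). set a' \<subseteq> S \<and> set b' \<subseteq> S \<and> frac_equiv a b a' b'}"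

text \<open>The fractions equal to a signed word, its letters acting from the left.\<close>

fun frac_value :: "'a sword \<Rightarrow> ('a list \<times> 'a list) set" where
  "frac_value [] = frac_class [] []"
| "frac_value ((s, True) # w) = {(a, b). set a \<subseteq> S \<and> set b \<subseteq> S \<and>
     (\<exists>(a', b') \<in> frac_value w. frac_equiv (s # a') b' a b)}"
| "frac_value ((s, False) # w) = {(a, b). set a \<subseteq> S \<and> set b \<subseteq> S \<and>
     (\<exists>(a', b') \<in> frac_value w. frac_equiv a' b' (s # a) b)}"

lemma mem_frac_class [simp]:
  "(x, y) \<in> frac_class a b \<longleftrightarrow> set x \<subseteq> S \<and> set y \<subseteq> S \<and> frac_equiv a b x y"
  by (simp add: frac_class_def)

lemma frac_equivI:
  "set c \<subseteq> S \<Longrightarrow> set c' \<subseteq> S \<Longrightarrow> equivp R (a @ c) (a' @ c') \<Longrightarrow> equivp R (b @ c) (b' @ c') \<Longrightarrow>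
    frac_equiv a b a' b'"
  unfolding frac_equiv_def by blast

lemma frac_equiv_refl: "frac_equiv a b a b"
  by (rule frac_equivI[of "[]" "[]"]) (auto intro: equivp.eq_refl)

lemma frac_equiv_sym: "frac_equiv a b a' b' \<Longrightarrow> frac_equiv a' b' a b"
  unfolding frac_equiv_def by (blast intro: equivp.eq_sym)

lemma frac_equiv_trans:
  assumes "frac_equiv a b a' b'" and "frac_equiv a' b' a'' b''"
  shows "frac_equiv a b a'' b''"
proof -
  obtain c c' where c: "set c \<subseteq> S" "set c' \<subseteq> S"
    and ac: "equivp R (a @ c) (a' @ c')" and bc: "equivp R (b @ c) (b' @ c')"
    using assms(1) unfolding frac_equiv_def by blast
  obtain d d' where d: "set d \<subseteq> S" "set d' \<subseteq> S"
    and ad: "equivp R (a' @ d) (a'' @ d')" and bd: "equivp R (b' @ d) (b'' @ d')"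
    using assms(2) unfolding frac_equiv_def by blast
  obtain e f where ef: "set e \<subseteq> S" "set f \<subseteq> S" and cd: "equivp R (c' @ e) (d @ f)"
    using common_right_multiplesD[OF right_multiples c(2) d(1)] by blast
  have "equivp R (x @ c @ e) (x'' @ d' @ f)"
    if "equivp R (x @ c) (x' @ c')" and "equivp R (x' @ d) (x'' @ d')" for x x' x''
  proof -
    have "equivp R (x @ c @ e) (x' @ c' @ e)"
      using equivp_append_right[OF that(1), of e] by simp
    also have "equivp R \<dots> (x' @ d @ f)"
      using equivp_append_left[OF cd] .
    also have "equivp R \<dots> (x'' @ d' @ f)"
      using equivp_append_right[OF that(2), of f] by simp
    finally show ?thesis .
  qed
  with ac bc ad bd show ?thesis
    using c d ef by (intro frac_equivI[of "c @ e" "d' @ f"]) auto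
qed

lemma frac_equiv_Cons: "frac_equiv a b a' b' \<Longrightarrow> frac_equiv (s # a) b (s # a') b'"
  unfolding frac_equiv_def using equivp_append_left[of R _ _ "[s]"] by auto

lemma frac_equiv_Cons_iff:
  assumes "s \<in> S" and "set a \<subseteq> S" and "set a' \<subseteq> S"
  shows "frac_equiv (s # a) b (s # a') b' \<longleftrightarrow> frac_equiv a b a' b'"
proof
  assume "frac_equiv (s # a) b (s # a') b'"
  then obtain c c' where "set c \<subseteq> S" "set c' \<subseteq> S" "equivp R (s # a @ c) (s # a' @ c')"
    and "equivp R (b @ c) (b' @ c')"
    unfolding frac_equiv_def by auto
  moreover from this(1-3) have "equivp R (a @ c) (a' @ c')"
    using equivp_Cons_cancel[OF positive r_complete cond_C \<open>s \<in> S\<close>] assms(2,3) by simp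
  ultimately show "frac_equiv a b a' b'"
    by (intro frac_equivI)
qed (rule frac_equiv_Cons)

lemma frac_class_eq: "frac_equiv a b a' b' \<Longrightarrow> frac_class a b = frac_class a' b'"
  unfolding frac_class_def by (blast intro: frac_equiv_sym frac_equiv_trans)

lemma frac_class_self: "set a \<subseteq> S \<Longrightarrow> set b \<subseteq> S \<Longrightarrow> (a, b) \<in> frac_class a b"
  unfolding frac_class_def by (simp add: frac_equiv_refl)

lemma frac_value_Cons_True:
  assumes "frac_value w = frac_class a b" and "set a \<subseteq> S" and "set b \<subseteq> S"
  shows "frac_value ((s, True) # w) = frac_class (s # a) b"
  using assms frac_class_self[OF assms(2,3)]
  by (auto simp: frac_class_def intro: frac_equiv_Cons frac_equiv_trans frac_equiv_sym)

lemma frac_value_Cons_False: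
  assumes "frac_value w = frac_class a b" and "set a \<subseteq> S" and "set b \<subseteq> S"
    and "s \<in> S" and "set a1 \<subseteq> S" and "set c \<subseteq> S" and "equivp R (s # a1) (a @ c)"
  shows "frac_value ((s, False) # w) = frac_class a1 (b @ c)"
proof -
  have "frac_value ((s, False) # w) = {(a', b'). set a' \<subseteq> S \<and> set b' \<subseteq> S \<and> frac_equiv a b (s # a') b'}"
    using assms(1-3) by (auto intro!: bexI[of _ "(a, b)"] frac_equiv_refl intro: frac_equiv_trans)
  moreover have "frac_equiv a b (s # a1) (b @ c)"
    using assms(6,7) by (intro frac_equivI[of c "[]"]) (auto intro: equivp.eq_sym equivp.eq_refl)
  then have "frac_equiv a b (s # a') b' \<longleftrightarrow> frac_equiv a1 (b @ c) a' b'" if "set a' \<subseteq> S" for a' b'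
    using frac_equiv_Cons_iff[OF assms(4,5) that] by (meson frac_equiv_sym frac_equiv_trans)
  ultimately show ?thesis
    by (auto simp: frac_class_def)
qed

lemma frac_value_class:
  assumes "fst ` set w \<subseteq> S"
  shows "\<exists>a b. set a \<subseteq> S \<and> set b \<subseteq> S \<and> frac_value w = frac_class a b"
  using assms
proof (induction w)
  case Nil
  show ?case
    by (intro exI[of _ "[]"]) simp
next
  case (Cons l w)
  obtain s sign where l: "l = (s, sign)" and "s \<in> S"
    using Cons.prems by (cases l) auto
  obtain a b where ab: "set a \<subseteq> S" "set b \<subseteq> S" and w: "frac_value w = frac_class a b"
    using Cons by auto
  show ?case
  proof (cases sign)
    case True
    then have "frac_value (l # w) = frac_class (s # a) b"
      using frac_value_Cons_True[OF w ab] l by simp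
    with ab \<open>s \<in> S\<close> show ?thesis
      by (intro exI[of _ "s # a"] exI[of _ b]) simp
  next
    case False
    obtain a1 c where a1c: "set a1 \<subseteq> S" "set c \<subseteq> S" "equivp R ([s] @ a1) (a @ c)"
      using common_right_multiplesD[OF right_multiples _ ab(1), of "[s]"] \<open>s \<in> S\<close> by auto
    with False have "frac_value (l # w) = frac_class a1 (b @ c)"
      using frac_value_Cons_False[OF w ab \<open>s \<in> S\<close>] l by simp
    with a1c ab show ?thesis
      by (intro exI[of _ a1] exI[of _ "b @ c"]) simp
  qed
qed

lemma frac_value_pos_append:
  assumes "frac_value w = frac_class a b" and "set a \<subseteq> S" and "set b \<subseteq> S" and "set u \<subseteq> S"
  shows "frac_value (pos u @ w) = frac_class (u @ a) b"
  using assms(4)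
proof (induction u)
  case (Cons s u)
  then show ?case
    using frac_value_Cons_True[of "pos u @ w" "u @ a" b s] assms(2,3) by simp
qed (simp add: assms(1))

lemma frac_value_ninv: "set u \<subseteq> S \<Longrightarrow> frac_value (ninv u) = frac_class [] u"
proof (induction u rule: rev_induct)
  case (snoc s u)
  then show ?case
    using frac_value_Cons_False[of "ninv u" "[]" u s "[]" "[s]"] by (simp add: equivp.eq_refl)
qed simp

lemma frac_value_append_cong:
  "frac_value w = frac_value w' \<Longrightarrow> frac_value (v @ w) = frac_value (v @ w')"
  by (induction v rule: frac_value.induct) simp_all

lemma frac_value_relation:
  assumes "(u, v) \<in> R" and "fst ` set w \<subseteq> S"
  shows "frac_value (pos u @ w) = frac_value (pos v @ w)"
proof -
  obtain a b where ab: "set a \<subseteq> S" "set b \<subseteq> S" and w: "frac_value w = frac_class a b"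
    using frac_value_class[OF assms(2)] by blast
  have "set u \<subseteq> S" "set v \<subseteq> S"
    using assms(1) positive by (auto simp: positive_presentation_def)
  moreover have "frac_equiv (u @ a) b (v @ a) b"
    using equivp.eq_rel[OF assms(1), of "[]" a]
    by (intro frac_equivI[of "[]" "[]"]) (auto intro: equivp.eq_refl)
  ultimately show ?thesis
    using frac_value_pos_append[OF w ab] frac_class_eq by simp
qed

lemma frac_value_cancel_pos_ninv:
  assumes "s \<in> S" and "fst ` set w \<subseteq> S"
  shows "frac_value ((s, True) # (s, False) # w) = frac_value w"
proof -
  obtain a b where ab: "set a \<subseteq> S" "set b \<subseteq> S" and w: "frac_value w = frac_class a b"
    using frac_value_class[OF assms(2)] by blast
  obtain a1 c where a1c: "set a1 \<subseteq> S" "set c \<subseteq> S" "equivp R ([s] @ a1) (a @ c)"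
    using common_right_multiplesD[OF right_multiples _ ab(1), of "[s]"] assms(1) by auto
  then have "frac_value ((s, False) # w) = frac_class a1 (b @ c)"
    using frac_value_Cons_False[OF w ab assms(1)] by simp
  moreover have "set (b @ c) \<subseteq> S"
    using ab(2) a1c(2) by simp
  ultimately have "frac_value ((s, True) # (s, False) # w) = frac_class (s # a1) (b @ c)"
    using frac_value_Cons_True a1c(1) by blast
  also have "\<dots> = frac_class a b"
    using a1c by (intro frac_class_eq frac_equivI[of "[]" c]) (auto intro: equivp.eq_refl)
  finally show ?thesis
    using w by simp
qed

lemma frac_value_cancel_ninv_pos:
  assumes "s \<in> S" and "fst ` set w \<subseteq> S"
  shows "frac_value ((s, False) # (s, True) # w) = frac_value w"
proof -
  obtain a b where ab: "set a \<subseteq> S" "set b \<subseteq> S" and w: "frac_value w = frac_class a b"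
    using frac_value_class[OF assms(2)] by blast
  have "frac_value ((s, True) # w) = frac_class (s # a) b"
    using frac_value_Cons_True[OF w ab] .
  then have "frac_value ((s, False) # (s, True) # w) = frac_class a (b @ [])"
    using frac_value_Cons_False[of "(s, True) # w" "s # a" b s a "[]"] ab assms(1)
    by (simp add: equivp.eq_refl)
  with w show ?thesis
    by simp
qed

lemma frac_value_equivpm:
  assumes "equivpm S R w w'" and "fst ` set w \<subseteq> S"
  shows "frac_value w = frac_value w'"
  using assms
proof induction
  case (eqpm_sym w w')
  then show ?case
    using equivpm_letters[OF positive] by metis
next
  case (eqpm_trans w w' w'')
  then show ?case
    using equivpm_letters[OF positive] by metis
next
  case (eqpm_rel u v x y)
  then have "fst ` set y \<subseteq> S"
    by (simp add: image_Un)
  with eqpm_rel(1) show ?case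
    by (intro frac_value_append_cong frac_value_relation)
next
  case (eqpm_cancel1 s x y)
  then have "fst ` set y \<subseteq> S"
    by (simp add: image_Un)
  then show ?case
    using frac_value_append_cong[OF frac_value_cancel_pos_ninv[OF eqpm_cancel1(1)], of y x] by simp
next
  case (eqpm_cancel2 s x y)
  then have "fst ` set y \<subseteq> S"
    by (simp add: image_Un)
  then show ?case
    using frac_value_append_cong[OF frac_value_cancel_ninv_pos[OF eqpm_cancel2(1)], of y x] by simp
qed simp

lemma equivp_if_equivpm_pos_ninv:
  assumes "set u \<subseteq> S" and "set v \<subseteq> S" and "equivpm S R (pos v @ ninv u) []"
  shows "equivp R v u"
proof -
  have "frac_class v u = frac_value []"
    using frac_value_pos_append[OF frac_value_ninv[OF assms(1)] _ assms(1,2)]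
      frac_value_equivpm[OF assms(3)] assms(1,2) by (simp add: image_Un)
  then have "frac_equiv [] [] v u"
    using frac_class_self[OF assms(2,1)] by simp
  then obtain c c' where "set c' \<subseteq> S" "equivp R c (v @ c')" "equivp R c (u @ c')"
    unfolding frac_equiv_def by auto
  then show ?thesis
    using equivp_append_right_cancel[OF positive l_complete cond_C] assms(1,2)
    by (meson equivp.eq_sym equivp.eq_trans)
qed

lemma lrev_Nil_iff_equivp:
  assumes "set u \<subseteq> S" and "set v \<subseteq> S"
  shows "lrev S R (pos v @ ninv u) [] \<longleftrightarrow> equivp R v u"
  using lrev_Nil_if_equivp[OF positive l_complete assms(2,1)]
    equivp_if_equivpm_pos_ninv[OF assms lrev_equivpm[OF positive]] by blast

lemma equivpm_Nil_iff_rrev: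
  assumes "fst ` set w \<subseteq> S"
  shows "equivpm S R w [] \<longleftrightarrow>
    (\<exists>u v. set u \<subseteq> S \<and> set v \<subseteq> S \<and> rrev S R w (pos v @ ninv u) \<and> equivp R v u)"
proof
  assume "equivpm S R w []"
  moreover obtain v u where uv: "set v \<subseteq> S" "set u \<subseteq> S" and w: "rrev S R w (pos v @ ninv u)"
    using rrev_to_pos_ninv[OF r_complete right_multiples assms] by blast
  ultimately have "equivpm S R (pos v @ ninv u) []"
    using equivpm.eqpm_sym[OF rrev_equivpm[OF positive w]] by (blast intro: equivpm.eqpm_trans)
  with uv w show "\<exists>u v. set u \<subseteq> S \<and> set v \<subseteq> S \<and> rrev S R w (pos v @ ninv u) \<and> equivp R v u"
    using equivp_if_equivpm_pos_ninv by blast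
next
  assume "\<exists>u v. set u \<subseteq> S \<and> set v \<subseteq> S \<and> rrev S R w (pos v @ ninv u) \<and> equivp R v u"
  then show "equivpm S R w []"
    using rrev_equivpm[OF positive] equivpm_pos_ninv_if_equivp equivpm.eqpm_trans by blast
qed

end

theorem proposition7p6:
  fixes S :: "'a set" and R :: "('a list \<times> 'a list) set" and w :: "('a \<times> bool) list"
  assumes "positive_presentation S R"
    and "complete S R"
    and "cond_C S R"
    and "cond_Er S R"
    and "fst ` set w \<subseteq> S"
  shows "(equivpm S R w [] \<longleftrightarrow>
            (\<exists>u v. set u \<subseteq> S \<and> set v \<subseteq> S \<and> rrev S R w (pos v @ ninv u) \<and>
                   rrev S R (ninv u @ pos v) []))
       \<and> (equivpm S R w [] \<longleftrightarrow>
            (\<exists>u v. set u \<subseteq> S \<and> set v \<subseteq> S \<and> rrev S R w (pos v @ ninv u) \<and>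
                   lrev S R (pos v @ ninv u) []))"
proof -
  interpret ore_presentation S R
    using assms(1-3) common_right_multiples_if_cond_Er[OF assms(4)] by unfold_locales
  have "rrev S R (ninv u @ pos v) [] \<longleftrightarrow> equivp R v u" if "set u \<subseteq> S" and "set v \<subseteq> S" for u v
    using rrev_Nil_iff_equivp[OF positive r_complete that] equivp.eq_sym by blast
  with equivpm_Nil_iff_rrev[OF assms(5)] lrev_Nil_iff_equivp show ?thesis
    by blast
qed

end
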